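(* Let $a,b\ge1$ be integers. Let $\mathcal{C}$ be a chain with spine $P=v_0,\dots,v_m$ and arc partition $A(P)=A_1\cup A_2$, and suppose $|A_2|\ge a(b+1)-1$. Then $\mathcal{C}$ contains a strong $(a,b)$-alternating-path $R$ with $s_1(R)=v_0$ and $t_a(R)=v_m$.
   Context: Fix $b\ge1$ and $g:=4b^2$. Gadgets have designated vertices $p,q$ with arc $(p,q)$. Type I: a directed cycle of length at least $g$ through $(p,q)$. Basic type II: vertices $p,q,r$ and a directed path $P_1$ from $r$ to $p$ of length at least $2b^2+b-2$, $q\notin V(P_1)$, every vertex of $P_1$ having an arc to $q$. Type III: vertices $p,q,r$, the arc $(p,q)$, and two internally vertex-disjoint directed paths $P_1,P_2$ from $p$ and from $q$ respectively to $r$, each of length at least $2b-1$. A trivial gadget consists only of $p,q$ and the arc $(p,q)$. A chain $\mathcal{C}$ consists of a directed path $P=v_0,\dots,v_m$ (the spine), a partition $A_1\cup A_2$ of its arc set, and non-trivial gadgets $(G_e)_{e\in A_2}$ such that: each $G_e$ is of type I, type III, or basic type II; for $e=(v_i,v_{i+1})\in A_2$, $p(G_e)=v_i$, $q(G_e)=v_{i+1}$ and $V(G_e)\cap\{v_0,\dots,v_m\}=\{v_i,v_{i+1}\}$; and $V(G_e)\cap V(G_f)\subseteq\{v_0,\dots,v_m\}$ for distinct $e,f\in A_2$. The chain is identified with the digraph $P\cup\bigcup_{e\in A_2}G_e$. An $(a,b)$-alternating-path is an oriented path $R$ consisting of vertices $s_1,\dots,s_a,t_1,\dots,t_a$ and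 pairwise internally vertex-disjoint directed paths $Q_1,\dots,Q_a,Q'_1,\dots,Q'_{a-1}$, $Q_i$ from $s_i$ to $t_i$, $Q'_i$ from $s_{i+1}$ to $t_i$, with $Q_2,\dots,Q_{a-1},Q'_1,\dots,Q'_{a-1}$ of length at least $b$; it is strong if also $Q_1$ and $Q_a$ have length at least $b$. *)

theory Defs
  imports Main
begin

text \<open>Digraphs are given by their arc sets (pairs of vertices).
  A directed path is a nonempty list of distinct vertices; its length is
  the number of arcs, i.e. the number of vertices minus one.\<close>

definition path_arcs :: "'a list \<Rightarrow> ('a \<times> 'a) set" where
  "path_arcs xs = set (zip xs (tl xs))"

definition plen :: "'a list \<Rightarrow> nat" where
  "plen xs = length xs - 1"

definition inner :: "'a list \<Rightarrow> 'a list" where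
  "inner xs = butlast (tl xs)"

definition dpath :: "('a \<times> 'a) set \<Rightarrow> 'a list \<Rightarrow> bool" where
  "dpath E xs \<longleftrightarrow> xs \<noteq> [] \<and> distinct xs \<and> path_arcs xs \<subseteq> E"

definition cycle_arcs :: "'a list \<Rightarrow> ('a \<times> 'a) set" where
  "cycle_arcs cs = set (zip cs (tl cs @ [hd cs]))"

definition gadget_I :: "nat \<Rightarrow> 'a set \<Rightarrow> ('a \<times> 'a) set \<Rightarrow> 'a \<Rightarrow> 'a \<Rightarrow> bool" where
  "gadget_I b V E p q \<longleftrightarrow>
     (\<exists>cs. distinct cs \<and> 2 \<le> length cs \<and> length cs \<ge> 4 * b^2 \<and>
           V = set cs \<and> E = cycle_arcs cs \<and> (p, q) \<in> E)"

definition gadget_II_basic :: "nat \<Rightarrow> 'a set \<Rightarrow> ('a \<times> 'a) set \<Rightarrow> 'a \<Rightarrow> 'a \<Rightarrow> bool" where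
  "gadget_II_basic b V E p q \<longleftrightarrow>
     (\<exists>r P1. P1 \<noteq> [] \<and> distinct P1 \<and> hd P1 = r \<and> last P1 = p \<and>
             plen P1 \<ge> 2 * b^2 + b - 2 \<and> q \<notin> set P1 \<and>
             V = insert q (set P1) \<and>
             E = path_arcs P1 \<union> {(x, q) | x. x \<in> set P1})"

definition gadget_III :: "nat \<Rightarrow> 'a set \<Rightarrow> ('a \<times> 'a) set \<Rightarrow> 'a \<Rightarrow> 'a \<Rightarrow> bool" where
  "gadget_III b V E p q \<longleftrightarrow>
     (\<exists>r P1 P2. p \<noteq> q \<and>
        P1 \<noteq> [] \<and> distinct P1 \<and> hd P1 = p \<and> last P1 = r \<and>
        P2 \<noteq> [] \<and> distinct P2 \<and> hd P2 = q \<and> last P2 = r \<and>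
        set (inner P1) \<inter> set P2 = {} \<and> set (inner P2) \<inter> set P1 = {} \<and>
        plen P1 \<ge> 2 * b - 1 \<and> plen P2 \<ge> 2 * b - 1 \<and>
        V = set P1 \<union> set P2 \<and>
        E = {(p, q)} \<union> path_arcs P1 \<union> path_arcs P2)"

definition trivial_gadget :: "'a set \<Rightarrow> ('a \<times> 'a) set \<Rightarrow> 'a \<Rightarrow> 'a \<Rightarrow> bool" where
  "trivial_gadget V E p q \<longleftrightarrow> V = {p, q} \<and> E = {(p, q)}"

text \<open>A chain: spine vs = [v0,...,vm], arc partition A1, A2 of the spine arcs,
  and gadgets G e = (V(G_e), A(G_e)) for e in A2.\<close>
definition chain :: "nat \<Rightarrow> 'a list \<Rightarrow> ('a \<times> 'a) set \<Rightarrow> ('a \<times> 'a) set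
                     \<Rightarrow> ('a \<times> 'a \<Rightarrow> 'a set \<times> ('a \<times> 'a) set) \<Rightarrow> bool" where
  "chain b vs A1 A2 G \<longleftrightarrow>
     vs \<noteq> [] \<and> distinct vs \<and>
     A1 \<union> A2 = path_arcs vs \<and> A1 \<inter> A2 = {} \<and>
     (\<forall>e\<in>A2. \<not> trivial_gadget (fst (G e)) (snd (G e)) (fst e) (snd e) \<and>
        (gadget_I b (fst (G e)) (snd (G e)) (fst e) (snd e) \<or>
         gadget_II_basic b (fst (G e)) (snd (G e)) (fst e) (snd e) \<or>
         gadget_III b (fst (G e)) (snd (G e)) (fst e) (snd e))) \<and>
     (\<forall>e\<in>A2. fst (G e) \<inter> set vs = {fst e, snd e}) \<and>
     (\<forall>e\<in>A2. \<forall>f\<in>A2. e \<noteq> f \<longrightarrow> fst (G e) \<inter> fst (G f) \<subseteq> set vs)"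

definition chain_arcs :: "'a list \<Rightarrow> ('a \<times> 'a) set
                     \<Rightarrow> ('a \<times> 'a \<Rightarrow> 'a set \<times> ('a \<times> 'a) set) \<Rightarrow> ('a \<times> 'a) set" where
  "chain_arcs vs A2 G = path_arcs vs \<union> (\<Union>e\<in>A2. snd (G e))"

definition alt_path ::
  "('a \<times> 'a) set \<Rightarrow> nat \<Rightarrow> nat \<Rightarrow> (nat \<Rightarrow> 'a) \<Rightarrow> (nat \<Rightarrow> 'a)
     \<Rightarrow> (nat \<Rightarrow> 'a list) \<Rightarrow> (nat \<Rightarrow> 'a list) \<Rightarrow> bool" where
  "alt_path E a b s t Q Q' \<longleftrightarrow>
     1 \<le> a \<and>
     distinct (map s [1..<a+1] @ map t [1..<a+1]) \<and>
     (\<forall>i\<in>{1..a}. dpath E (Q i) \<and> hd (Q i) = s i \<and> last (Q i) = t i) \<and>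
     (\<forall>i\<in>{1..<a}. dpath E (Q' i) \<and> hd (Q' i) = s (Suc i) \<and> last (Q' i) = t i) \<and>
     (let I = {(False, i) | i. i \<in> {1..a}} \<union> {(True, i) | i. i \<in> {1..<a}};
          F = (\<lambda>(k, i). if k then Q' i else Q i)
      in \<forall>x\<in>I. \<forall>y\<in>I. x \<noteq> y \<longrightarrow> set (inner (F x)) \<inter> set (F y) = {}) \<and>
     (\<forall>i. 2 \<le> i \<and> i \<le> a - 1 \<longrightarrow> plen (Q i) \<ge> b) \<and>
     (\<forall>i\<in>{1..<a}. plen (Q' i) \<ge> b)"

definition strong_alt_path ::
  "('a \<times> 'a) set \<Rightarrow> nat \<Rightarrow> nat \<Rightarrow> (nat \<Rightarrow> 'a) \<Rightarrow> (nat \<Rightarrow> 'a)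
     \<Rightarrow> (nat \<Rightarrow> 'a list) \<Rightarrow> (nat \<Rightarrow> 'a list) \<Rightarrow> bool" where
  "strong_alt_path E a b s t Q Q' \<longleftrightarrow>
     alt_path E a b s t Q Q' \<and> plen (Q 1) \<ge> b \<and> plen (Q a) \<ge> b"

end

theory Submission
  imports Defs
begin

text \<open>
  Walk along the spine from \<open>v\<^sub>0\<close> to \<open>v\<^sub>m\<close>. An arc \<open>(p, q)\<close> of \<open>A\<^sub>2\<close> can be crossed along
  the spine, or through its gadget by a detour that goes forwards, then at least \<open>b\<close> steps
  backwards, then forwards again to \<open>q\<close>: backwards around the cycle (type I), backwards along
  \<open>P\<^sub>1\<close> and across to \<open>q\<close> (type II), or forwards along \<open>P\<^sub>1\<close> and backwards along \<open>P\<^sub>2\<close> (type III).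
  Take a detour through every \<open>(b+1)\<close>-st arc of \<open>A\<^sub>2\<close> and the spine elsewhere. Since distinct
  gadgets meet only on the spine, this is a self-avoiding walk; it alternates between \<open>a\<close>
  forward segments, each containing \<open>b\<close> spine arcs of \<open>A\<^sub>2\<close>, and \<open>a - 1\<close> backward segments of
  length at least \<open>b\<close>, which uses \<open>a(b+1) - 1\<close> arcs of \<open>A\<^sub>2\<close>. Its turning points are
  \<open>s\<^sub>1, t\<^sub>1, \<dots>, s\<^sub>a, t\<^sub>a\<close>, its forward segments are the paths \<open>Q\<^sub>i\<close>, and its backward
  segments are the paths \<open>Q'\<^sub>i\<close> reversed.
\<close>

lemma path_arcs_iff_nth:
  "(u, v) \<in> path_arcs xs \<longleftrightarrow> (\<exists>i. Suc i < length xs \<and> xs ! i = u \<and> xs ! Suc i = v)"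
  unfolding path_arcs_def set_zip
  by (auto simp: nth_tl) (metis Suc_lessD length_tl less_diff_conv nth_tl add_Suc_right add_0_right)

lemma nth_in_path_arcs: "Suc i < length xs \<Longrightarrow> (xs ! i, xs ! Suc i) \<in> path_arcs xs"
  by (auto simp: path_arcs_iff_nth)

lemma path_arcs_singleton [simp]: "path_arcs [x] = {}"
  by (simp add: path_arcs_def)

lemma path_arcs_Cons: "xs \<noteq> [] \<Longrightarrow> path_arcs (x # xs) = insert (x, hd xs) (path_arcs xs)"
  unfolding path_arcs_def by (cases xs) auto

lemma path_arcs_append:
  "xs \<noteq> [] \<Longrightarrow> ys \<noteq> [] \<Longrightarrow>
    path_arcs (xs @ ys) = path_arcs xs \<union> insert (last xs, hd ys) (path_arcs ys)"
proof (induction xs)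
  case (Cons x xs)
  then show ?case by (cases "xs = []") (auto simp: path_arcs_Cons)
qed simp

lemma path_arcs_rev: "path_arcs (rev xs) = (path_arcs xs)\<inverse>"
proof (induction xs)
  case (Cons x xs)
  then show ?case
    by (cases "xs = []") (auto simp: path_arcs_append path_arcs_Cons last_rev)
qed (simp add: path_arcs_def)

lemma path_arcs_subset_set: "(u, v) \<in> path_arcs xs \<Longrightarrow> u \<in> set xs \<and> v \<in> set xs"
  unfolding path_arcs_def by (cases xs) (auto dest: set_zip_leftD set_zip_rightD)

lemma finite_path_arcs: "finite (path_arcs xs)"
  unfolding path_arcs_def by simp

lemma plen_rev [simp]: "plen (rev xs) = plen xs"
  by (simp add: plen_def)

lemma set_inner_rev: "set (inner (rev xs)) = set (inner xs)"
  unfolding inner_def by (metis butlast_rev butlast_tl rev_rev_ident set_rev)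

lemma hd_inner_last: "2 \<le> length xs \<Longrightarrow> xs = hd xs # inner xs @ [last xs]"
  unfolding inner_def by (cases xs) (auto simp: append_butlast_last_id)

lemma last_notin_butlast: "distinct xs \<Longrightarrow> last xs \<notin> set (butlast xs)"
  by (induction xs) auto

lemma set_tl_subset: "set (tl xs) \<subseteq> set xs"
  by (cases xs) auto

lemma set_butlast_subset: "set (butlast xs) \<subseteq> set xs"
  by (auto dest: in_set_butlastD)

lemma path_arcs_map_upt_subset:
  assumes "\<And>j. lo \<le> j \<Longrightarrow> j < hi \<Longrightarrow> (w j, w (Suc j)) \<in> E"
  shows "path_arcs (map w [lo..<Suc hi]) \<subseteq> E"
proof
  fix e assume "e \<in> path_arcs (map w [lo..<Suc hi])"
  then obtain i where "Suc i < Suc hi - lo" "e = (w (lo + i), w (Suc (lo + i)))"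
    by (cases e) (auto simp: path_arcs_iff_nth simp del: upt_Suc)
  then show "e \<in> E" using assms[of "lo + i"] by simp
qed

lemma set_inner_map_upt: "set (inner (map w [lo..<Suc hi])) = w ` {lo<..<hi}"
proof -
  have "butlast [Suc lo..<Suc hi] = [Suc lo..<hi]"
    by (cases "Suc lo \<le> hi") auto
  then have "inner (map w [lo..<Suc hi]) = map w [Suc lo..<hi]"
    unfolding inner_def by (simp add: map_tl[symmetric] map_butlast[symmetric] del: upt_Suc)
  then show ?thesis by auto
qed

lemma plen_map_upt: "plen (map w [lo..<Suc hi]) = hi - lo"
  by (simp add: plen_def)

lemma dpath_singleton [simp]: "dpath E [v]"
  by (simp add: dpath_def)

lemma dpath_arc: "(u, v) \<in> E \<Longrightarrow> u \<noteq> v \<Longrightarrow> dpath E [u, v]"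
  by (simp add: dpath_def path_arcs_def)

lemma dpath_mono: "dpath E P \<Longrightarrow> E \<subseteq> E' \<Longrightarrow> dpath E' P"
  unfolding dpath_def by blast

lemma cycle_arcs_eq:
  assumes "cs \<noteq> []"
  shows "cycle_arcs cs = insert (last cs, hd cs) (path_arcs cs)"
proof -
  have cs: "cs = butlast cs @ [last cs]" and len: "length (butlast cs) = length (tl cs)"
    using assms by simp_all
  have "cycle_arcs cs = set (zip (butlast cs @ [last cs]) (tl cs @ [hd cs]))"
    unfolding cycle_arcs_def using cs by simp
  also have "\<dots> = insert (last cs, hd cs) (set (zip (butlast cs) (tl cs)))"
    using len by (simp add: zip_append)
  also have "set (zip (butlast cs) (tl cs)) = path_arcs cs"
  proof -
    have "path_arcs cs = set (zip (butlast cs @ [last cs]) (tl cs @ []))"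
      unfolding path_arcs_def using cs by simp
    then show ?thesis using zip_append[OF len, of "[last cs]" "[]"] by simp
  qed
  finally show ?thesis .
qed

lemma cycle_arcs_rotate1: "cycle_arcs (rotate1 cs) = cycle_arcs cs"
proof (cases cs)
  case (Cons x xs)
  then show ?thesis
    by (cases "xs = []") (auto simp: cycle_arcs_eq path_arcs_append path_arcs_Cons)
qed simp

lemma cycle_arcs_rotate: "cycle_arcs (rotate n cs) = cycle_arcs cs"
  by (induction n) (simp_all add: cycle_arcs_rotate1)

lemma cycle_arcs_into_hd:
  assumes "distinct cs" "(u, hd cs) \<in> cycle_arcs cs"
  shows "u = last cs"
proof (rule ccontr)
  assume "u \<noteq> last cs"
  moreover have "cs \<noteq> []" using assms(2) by (auto simp: cycle_arcs_def)
  ultimately obtain i where "Suc i < length cs" "cs ! Suc i = cs ! 0"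
    using assms(2) by (auto simp: cycle_arcs_eq path_arcs_iff_nth hd_conv_nth)
  then show False using assms(1) nth_eq_iff_index_eq[of cs "Suc i" 0] by (cases cs) auto
qed

section \<open>Zigzag walks\<close>

lemma even_index_neq_odd_index: "1 \<le> j \<Longrightarrow> 2*i-2 \<noteq> 2*j-(1::nat)"
  by presburger

text \<open>
  The breakpoints \<open>x 0 = 0 \<le> \<dots> \<le> x (2a-1) = N\<close> cut the walk \<open>w 0, \<dots>, w N\<close> into segments
  that follow \<open>E\<close> forwards (even \<open>k\<close>) and backwards (odd \<open>k\<close>). The first segment may be
  short: its length is tracked separately while the walk is built.
\<close>

definition zigzag ::
  "('a \<times> 'a) set \<Rightarrow> nat \<Rightarrow> nat \<Rightarrow> nat \<Rightarrow> (nat \<Rightarrow> 'a) \<Rightarrow> (nat \<Rightarrow> nat) \<Rightarrow> bool" where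
  "zigzag E b a N w x \<longleftrightarrow> inj_on w {..N} \<and> x 0 = 0 \<and> x (2*a-1) = N \<and>
     (\<forall>k. 1 \<le> k \<longrightarrow> k < 2*a-1 \<longrightarrow> x k + b \<le> x (Suc k)) \<and>
     (\<forall>k<2*a-1. \<forall>j. x k \<le> j \<longrightarrow> j < x (Suc k) \<longrightarrow>
        (if even k then (w j, w (Suc j)) \<in> E else (w (Suc j), w j) \<in> E))"

lemma zigzag_arc:
  assumes "zigzag E b a N w x" "k < 2*a-1" "x k \<le> j" "j < x (Suc k)"
  shows "if even k then (w j, w (Suc j)) \<in> E else (w (Suc j), w j) \<in> E"
  using assms unfolding zigzag_def by blast

definition zigzag_segment :: "(nat \<Rightarrow> 'a) \<Rightarrow> (nat \<Rightarrow> nat) \<Rightarrow> nat \<Rightarrow> 'a list" where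
  "zigzag_segment w x k = map w [x k..<Suc (x (Suc k))]"

lemma set_zigzag_segment: "set (zigzag_segment w x k) = w ` {x k..x (Suc k)}"
  unfolding zigzag_segment_def by auto

lemma set_inner_zigzag_segment: "set (inner (zigzag_segment w x k)) = w ` {x k<..<x (Suc k)}"
  unfolding zigzag_segment_def by (rule set_inner_map_upt)

lemma plen_zigzag_segment: "plen (zigzag_segment w x k) = x (Suc k) - x k"
  unfolding zigzag_segment_def by (rule plen_map_upt)

context
  fixes E :: "('a \<times> 'a) set" and b a N :: nat and w :: "nat \<Rightarrow> 'a" and x :: "nat \<Rightarrow> nat"
  assumes zigzag: "zigzag E b a N w x" and b_pos: "1 \<le> b" and first_long: "b \<le> x 1"
begin

lemma zigzag_breakpoints_less:
  assumes "i < j" "j \<le> 2*a-1"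
  shows "x i < x j"
proof (rule lift_Suc_mono_less_ivl[of "{..<2*a-1}" x])
  fix k assume "k \<in> {..<2*a-1}"
  then show "x k < x (Suc k)"
    using zigzag b_pos first_long unfolding zigzag_def
    by (cases "k = 0") (auto intro: less_le_trans[of _ "x k + b"])
qed (use assms in auto)

lemma zigzag_breakpoint_le: "k \<le> 2*a-1 \<Longrightarrow> x k \<le> N"
  using zigzag_breakpoints_less[of k "2*a-1"] zigzag unfolding zigzag_def
  by (cases "k = 2*a-1") auto

lemma zigzag_breakpoint_vertex_eq:
  assumes "w (x k) = w (x k')" "k \<le> 2*a-1" "k' \<le> 2*a-1"
  shows "k = k'"
proof -
  have "x k = x k'"
    using assms zigzag zigzag_breakpoint_le unfolding zigzag_def by (auto dest: inj_onD)
  then show ?thesis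
    using zigzag_breakpoints_less assms(2,3) by (metis less_irrefl linorder_neqE_nat)
qed

lemma
  assumes "k < 2*a-1"
  shows hd_zigzag_segment: "hd (zigzag_segment w x k) = w (x k)"
    and last_zigzag_segment: "last (zigzag_segment w x k) = w (x (Suc k))"
    and distinct_zigzag_segment: "distinct (zigzag_segment w x k)"
proof -
  have le: "x k \<le> x (Suc k)" "x (Suc k) \<le> N"
    using zigzag_breakpoints_less[of k "Suc k"] zigzag_breakpoint_le[of "Suc k"] assms by auto
  then show "hd (zigzag_segment w x k) = w (x k)" "last (zigzag_segment w x k) = w (x (Suc k))"
    unfolding zigzag_segment_def by (simp_all add: hd_map last_map del: upt_Suc)
  have "inj_on w {x k..x (Suc k)}"
    using zigzag le unfolding zigzag_def by (auto intro: inj_on_subset)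
  then show "distinct (zigzag_segment w x k)"
    unfolding zigzag_segment_def
    by (simp add: distinct_map atLeastLessThanSuc_atLeastAtMost del: upt_Suc)
qed

lemma zigzag_segment_arcs:
  assumes "k < 2*a-1"
  shows "path_arcs (zigzag_segment w x k) \<subseteq> (if even k then E else E\<inverse>)"
  unfolding zigzag_segment_def
  using zigzag assms unfolding zigzag_def by (intro path_arcs_map_upt_subset) auto

lemma dpath_zigzag_segment:
  "k < 2*a-1 \<Longrightarrow> even k \<Longrightarrow> dpath E (zigzag_segment w x k)"
  using zigzag_segment_arcs[of k] distinct_zigzag_segment[of k] zigzag_breakpoints_less[of k "Suc k"]
  unfolding dpath_def zigzag_segment_def by (simp del: upt_Suc)

lemma dpath_rev_zigzag_segment:
  "k < 2*a-1 \<Longrightarrow> odd k \<Longrightarrow> dpath E (rev (zigzag_segment w x k))"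
  using zigzag_segment_arcs[of k] distinct_zigzag_segment[of k] zigzag_breakpoints_less[of k "Suc k"]
  unfolding dpath_def zigzag_segment_def by (auto simp: path_arcs_rev simp del: upt_Suc)

lemma zigzag_segments_disjoint:
  assumes "k < 2*a-1" "k' < 2*a-1" "k \<noteq> k'"
  shows "set (inner (zigzag_segment w x k)) \<inter> set (zigzag_segment w x k') = {}"
proof -
  have le: "x i \<le> x j" if "i \<le> j" "j \<le> 2*a-1" for i j
    using zigzag_breakpoints_less[of i j] that by (cases "i = j") auto
  have "{x k<..<x (Suc k)} \<inter> {x k'..x (Suc k')} = {}"
    using le[of "Suc k" k'] le[of "Suc k'" k] assms by (cases "k < k'") auto
  moreover have "{x k<..<x (Suc k)} \<union> {x k'..x (Suc k')} \<subseteq> {..N}"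
    using zigzag_breakpoint_le[of "Suc k"] zigzag_breakpoint_le[of "Suc k'"] assms by auto
  ultimately show ?thesis
    using zigzag unfolding zigzag_def set_inner_zigzag_segment set_zigzag_segment
    by (metis image_empty inj_on_image_Int le_sup_iff)
qed

lemma b_le_plen_zigzag_segment:
  assumes "k < 2*a-1"
  shows "b \<le> plen (zigzag_segment w x k)"
proof (cases "k = 0")
  case False
  then have "x k + b \<le> x (Suc k)" using zigzag assms unfolding zigzag_def by simp
  then show ?thesis unfolding plen_zigzag_segment by simp
qed (use zigzag first_long in \<open>simp add: plen_zigzag_segment zigzag_def\<close>)

lemma distinct_zigzag_breakpoint_vertices:
  "distinct (map (\<lambda>i. w (x (2*i-2))) [1..<a+1] @ map (\<lambda>i. w (x (2*i-1))) [1..<a+1])"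
proof -
  have "inj_on (\<lambda>i. w (x (2*i-2))) {1..<a+1}" "inj_on (\<lambda>i. w (x (2*i-1))) {1..<a+1}"
    unfolding inj_on_def by (auto dest!: zigzag_breakpoint_vertex_eq)
  moreover have "w (x (2*i-2)) \<noteq> w (x (2*j-1))" if "i \<in> {1..<a+1}" "j \<in> {1..<a+1}" for i j
    using that even_index_neq_odd_index[of j i] by (auto dest!: zigzag_breakpoint_vertex_eq)
  ultimately show ?thesis by (auto simp: distinct_append distinct_map simp del: upt_Suc)
qed

lemma zigzag_segments_pairwise_disjoint:
  "let I = {(False, i) |i. i \<in> {1..a}} \<union> {(True, i) |i. i \<in> {1..<a}};
       F = \<lambda>(k, i). if k then rev (zigzag_segment w x (2*i-1)) else zigzag_segment w x (2*i-2)
   in \<forall>p\<in>I. \<forall>q\<in>I. p \<noteq> q \<longrightarrow> set (inner (F p)) \<inter> set (F q) = {}"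
  unfolding Let_def
proof (intro ballI impI)
  fix p q
  assume "p \<in> {(False, i) |i. i \<in> {1..a}} \<union> {(True, i) |i. i \<in> {1..<a}}"
    and "q \<in> {(False, i) |i. i \<in> {1..a}} \<union> {(True, i) |i. i \<in> {1..<a}}" and "p \<noteq> q"
  moreover define idx where "idx = (\<lambda>(odd_index::bool, i::nat). if odd_index then 2*i-1 else 2*i-2)"
  ultimately have "idx p < 2*a-1" "idx q < 2*a-1" "idx p \<noteq> idx q"
    using even_index_neq_odd_index even_index_neq_odd_index[THEN not_sym] by (auto simp: idx_def)
  moreover have
    "set (inner ((\<lambda>(k, i). if k then rev (zigzag_segment w x (2*i-1)) else zigzag_segment w x (2*i-2)) y))
       = set (inner (zigzag_segment w x (idx y)))"
    "set ((\<lambda>(k, i). if k then rev (zigzag_segment w x (2*i-1)) else zigzag_segment w x (2*i-2)) y)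
       = set (zigzag_segment w x (idx y))" for y
    unfolding idx_def by (auto simp: set_inner_rev split: prod.splits)
  ultimately show
    "set (inner ((\<lambda>(k, i). if k then rev (zigzag_segment w x (2*i-1)) else zigzag_segment w x (2*i-2)) p))
       \<inter> set ((\<lambda>(k, i). if k then rev (zigzag_segment w x (2*i-1)) else zigzag_segment w x (2*i-2)) q)
     = {}"
    using zigzag_segments_disjoint by simp
qed

lemma zigzag_strong_alt_path:
  assumes "1 \<le> a"
  shows "\<exists>s t Q Q'. strong_alt_path E a b s t Q Q' \<and> s 1 = w 0 \<and> t a = w N"
proof -
  define s where "s i = w (x (2*i-2))" for i
  define t where "t i = w (x (2*i-1))" for i
  define Q where "Q i = zigzag_segment w x (2*i-2)" for i
  define Q' where "Q' i = rev (zigzag_segment w x (2*i-1))" for i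
  have "strong_alt_path E a b s t Q Q'"
    unfolding strong_alt_path_def alt_path_def
  proof (intro conjI)
    show "distinct (map s [1..<a + 1] @ map t [1..<a + 1])"
      unfolding s_def[abs_def] t_def[abs_def] by (rule distinct_zigzag_breakpoint_vertices)
    show "\<forall>i\<in>{1..a}. dpath E (Q i) \<and> hd (Q i) = s i \<and> last (Q i) = t i"
    proof
      fix i assume "i \<in> {1..a}"
      then have "2*i-2 < 2*a-1" "even (2*i-2)" "Suc (2*i-2) = 2*i-1" by auto
      then show "dpath E (Q i) \<and> hd (Q i) = s i \<and> last (Q i) = t i"
        unfolding Q_def s_def t_def
        by (simp add: dpath_zigzag_segment hd_zigzag_segment last_zigzag_segment)
    qed
    show "\<forall>i\<in>{1..<a}. dpath E (Q' i) \<and> hd (Q' i) = s (Suc i) \<and> last (Q' i) = t i"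
    proof
      fix i assume "i \<in> {1..<a}"
      then have "2*i-1 < 2*a-1" "odd (2*i-1)" "Suc (2*i-1) = 2 * Suc i - 2" by auto
      then show "dpath E (Q' i) \<and> hd (Q' i) = s (Suc i) \<and> last (Q' i) = t i"
        unfolding Q'_def s_def t_def
        by (simp add: dpath_rev_zigzag_segment hd_zigzag_segment last_zigzag_segment hd_rev last_rev)
    qed
    show "let I = {(False, i) |i. i \<in> {1..a}} \<union> {(True, i) |i. i \<in> {1..<a}};
        F = \<lambda>(k, i). if k then Q' i else Q i
      in \<forall>x\<in>I. \<forall>y\<in>I. x \<noteq> y \<longrightarrow> set (inner (F x)) \<inter> set (F y) = {}"
      unfolding Q_def[abs_def] Q'_def[abs_def] by (rule zigzag_segments_pairwise_disjoint)
    show "\<forall>i. 2 \<le> i \<and> i \<le> a - 1 \<longrightarrow> b \<le> plen (Q i)"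
      unfolding Q_def using b_le_plen_zigzag_segment by auto
    show "\<forall>i\<in>{1..<a}. b \<le> plen (Q' i)"
      unfolding Q'_def plen_def length_rev using b_le_plen_zigzag_segment[unfolded plen_def] by auto
    show "b \<le> plen (Q 1)" "b \<le> plen (Q a)"
      unfolding Q_def using b_le_plen_zigzag_segment assms by auto
  qed fact
  moreover have "s 1 = w 0" "t a = w N"
    using zigzag assms unfolding s_def t_def zigzag_def by auto
  ultimately show ?thesis by blast
qed

end

lemma atMost_add_split: "{..m + n} = {..<m} \<union> {m..m + n}" for m n :: nat
  by auto

text \<open>Intended for \<open>last P = w 0\<close>, so that the walk turns from \<open>P\<close> into \<open>w\<close>.\<close>

definition prepend_path :: "'a list \<Rightarrow> (nat \<Rightarrow> 'a) \<Rightarrow> nat \<Rightarrow> 'a" where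
  "prepend_path P w j = (if j < plen P then P ! j else w (j - plen P))"

lemma prepend_path_shift: "plen P \<le> j \<Longrightarrow> prepend_path P w j = w (j - plen P)"
  unfolding prepend_path_def by simp

lemma prepend_path_nth:
  assumes "P \<noteq> []" "last P = w 0" "j \<le> plen P"
  shows "prepend_path P w j = P ! j"
  using assms by (cases "j = plen P") (auto simp: prepend_path_def plen_def last_conv_nth)

lemma prepend_path_0: "P \<noteq> [] \<Longrightarrow> last P = w 0 \<Longrightarrow> prepend_path P w 0 = hd P"
  by (simp add: prepend_path_nth hd_conv_nth)

lemma prepend_path_arc:
  assumes "P \<noteq> []" "last P = w 0" "j < plen P"
  shows "(prepend_path P w j, prepend_path P w (Suc j)) \<in> path_arcs P"
  using assms by (simp add: prepend_path_nth nth_in_path_arcs plen_def)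

lemma prepend_path_front: "j < plen P \<Longrightarrow> prepend_path P w j = butlast P ! j"
  by (simp add: prepend_path_def plen_def nth_butlast)

lemma prepend_path_image_front: "prepend_path P w ` {..<plen P} = set (butlast P)"
proof -
  have "prepend_path P w ` {..<plen P} = (!) (butlast P) ` {0..<length (butlast P)}"
    by (intro image_cong) (auto simp: prepend_path_front plen_def)
  then show ?thesis by (simp add: nth_image)
qed

lemma prepend_path_image_back: "prepend_path P w ` {plen P..plen P + N} = w ` {..N}"
proof -
  have "{plen P..plen P + N} = (+) (plen P) ` {0..N}" by simp
  then show ?thesis by (simp add: image_image prepend_path_shift atLeast0AtMost)
qed

lemma image_prepend_path:
  "prepend_path P w ` {..plen P + N} = set (butlast P) \<union> w ` {..N}"
  unfolding atMost_add_split image_Un prepend_path_image_front prepend_path_image_back ..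

lemma inj_on_prepend_path:
  assumes "distinct (butlast P)" "inj_on w {..N}" "set (butlast P) \<inter> w ` {..N} = {}"
  shows "inj_on (prepend_path P w) {..plen P + N}"
  unfolding atMost_add_split inj_on_Un
proof (intro conjI)
  show "inj_on (prepend_path P w) {..<plen P}"
    using inj_on_nth[OF assms(1), of "{..<plen P}"]
    by (rule inj_on_cong[THEN iffD1, rotated]) (auto simp: prepend_path_front plen_def)
  show "inj_on (prepend_path P w) {plen P..plen P + N}"
  proof (rule inj_onI)
    fix i j assume "i \<in> {plen P..plen P + N}" "j \<in> {plen P..plen P + N}"
      "prepend_path P w i = prepend_path P w j"
    then have "i - plen P = j - plen P"
      using assms(2) by (auto simp: prepend_path_shift dest: inj_onD)
    then show "i = j" using \<open>i \<in> _\<close> \<open>j \<in> _\<close> by auto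
  qed
  show "prepend_path P w ` ({..<plen P} - {plen P..plen P + N}) \<inter>
      prepend_path P w ` ({plen P..plen P + N} - {..<plen P}) = {}"
  proof -
    have "{..<plen P} - {plen P..plen P + N} = {..<plen P}"
      "{plen P..plen P + N} - {..<plen P} = {plen P..plen P + N}" by auto
    then show ?thesis
      using assms(3) by (simp add: prepend_path_image_front prepend_path_image_back)
  qed
qed

lemma zigzag_prepend_path_arc:
  assumes "zigzag E b a N w x" "k < 2*a-1" "x k + plen P \<le> j" "j < x (Suc k) + plen P"
  shows "if even k then (prepend_path P w j, prepend_path P w (Suc j)) \<in> E
         else (prepend_path P w (Suc j), prepend_path P w j) \<in> E"
proof -
  have "if even k then (w (j - plen P), w (Suc (j - plen P))) \<in> E
        else (w (Suc (j - plen P)), w (j - plen P)) \<in> E"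
    using assms by (intro zigzag_arc) auto
  moreover have "prepend_path P w j = w (j - plen P)"
    "prepend_path P w (Suc j) = w (Suc (j - plen P))"
    using assms(3) by (auto simp: prepend_path_shift Suc_diff_le)
  ultimately show ?thesis by simp
qed

lemma zigzag_prepend_forward:
  assumes Z: "zigzag E b a N w x" and a: "1 \<le> a"
    and P: "dpath E P" "last P = w 0" and disj: "set (butlast P) \<inter> w ` {..N} = {}"
  shows "\<exists>x'. zigzag E b a (plen P + N) (prepend_path P w) x' \<and> x' 1 = x 1 + plen P"
proof -
  define x' where "x' k = (if k = 0 then 0 else x k + plen P)" for k
  have x: "x 0 = 0" "x (2*a-1) = N" "\<And>k. 1 \<le> k \<Longrightarrow> k < 2*a-1 \<Longrightarrow> x k + b \<le> x (Suc k)"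
    using Z unfolding zigzag_def by auto
  have "zigzag E b a (plen P + N) (prepend_path P w) x'"
    unfolding zigzag_def
  proof (intro conjI allI impI)
    show "inj_on (prepend_path P w) {..plen P + N}"
      using Z P disj by (intro inj_on_prepend_path) (auto simp: zigzag_def dpath_def distinct_butlast)
    fix k j
    assume k: "k < 2*a-1" and j: "x' k \<le> j" "j < x' (Suc k)"
    show "if even k then (prepend_path P w j, prepend_path P w (Suc j)) \<in> E
          else (prepend_path P w (Suc j), prepend_path P w j) \<in> E"
    proof (cases "j < plen P")
      case True
      then have "k = 0" using j by (auto simp: x'_def split: if_splits)
      then show ?thesis using prepend_path_arc[of P w j] P True by (auto simp: dpath_def)
    next
      case False
      then show ?thesis
        using zigzag_prepend_path_arc[OF Z k] j x(1) by (cases "k = 0") (auto simp: x'_def)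
    qed
  qed (use x a in \<open>auto simp: x'_def\<close>)
  then show ?thesis by (intro exI[of _ x']) (simp add: x'_def)
qed

lemma zigzag_prepend_backward:
  assumes Z: "zigzag E b a N w x" and a: "1 \<le> a" and first_long: "b \<le> x 1"
    and P: "dpath E P" "hd P = w 0" "b \<le> plen P" and disj: "set (tl P) \<inter> w ` {..N} = {}"
  shows "\<exists>x'. zigzag E b (Suc a) (plen P + N) (prepend_path (rev P) w) x'"
proof -
  define x' where "x' k = (if k < 2 then 0 else x (k - 2) + plen P)" for k
  have x: "x 0 = 0" "x (2*a-1) = N" "\<And>k. 1 \<le> k \<Longrightarrow> k < 2*a-1 \<Longrightarrow> x k + b \<le> x (Suc k)"
    using Z unfolding zigzag_def by auto
  have rev_P: "plen (rev P) = plen P" "last (rev P) = w 0" "rev P \<noteq> []"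
    "set (butlast (rev P)) = set (tl P)" "distinct (butlast (rev P))"
    using P by (auto simp: plen_def dpath_def last_rev butlast_rev distinct_tl)
  have "zigzag E b (Suc a) (plen P + N) (prepend_path (rev P) w) x'"
    unfolding zigzag_def
  proof (intro conjI allI impI)
    show "inj_on (prepend_path (rev P) w) {..plen P + N}"
      using Z rev_P disj inj_on_prepend_path[of "rev P" w N] by (simp add: zigzag_def)
    fix k j
    assume k: "k < 2 * Suc a - 1" and j: "x' k \<le> j" "j < x' (Suc k)"
    show "if even k then (prepend_path (rev P) w j, prepend_path (rev P) w (Suc j)) \<in> E
          else (prepend_path (rev P) w (Suc j), prepend_path (rev P) w j) \<in> E"
    proof (cases "k < 2")
      case True
      then have "k = 1" "j < plen (rev P)" using j x(1) rev_P(1) by (auto simp: x'_def split: if_splits)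
      then show ?thesis
        using prepend_path_arc[of "rev P" w j] rev_P P by (auto simp: dpath_def path_arcs_rev)
    next
      case False
      then have "k - 2 < 2*a-1" "Suc (k - 2) = k - 1" "even (k - 2) = even k" using k by auto
      then show ?thesis
        using zigzag_prepend_path_arc[OF Z, of "k - 2" "rev P" j] j False
        by (auto simp: x'_def rev_P(1) split: if_splits)
    qed
  next
    fix k assume "1 \<le> k" "k < 2 * Suc a - 1"
    then show "x' k + b \<le> x' (Suc k)"
      using x(3)[of "k - 2"] first_long P(3) x(1)
      by (cases "k \<le> 2") (auto simp: x'_def numeral_2_eq_2 Suc_diff_Suc)
  qed (use x a in \<open>auto simp: x'_def\<close>)
  then show ?thesis by blast
qed

section \<open>Detours through gadgets\<close>

text \<open>
  Forwards along \<open>F\<close>, backwards along \<open>B\<close>, forwards along \<open>F'\<close>; the vertex list of this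
  walk is \<open>butlast F @ rev (tl B) @ F'\<close>.
\<close>

definition detour :: "nat \<Rightarrow> 'a set \<Rightarrow> ('a \<times> 'a) set \<Rightarrow> 'a \<Rightarrow> 'a \<Rightarrow> bool" where
  "detour b V E p q \<longleftrightarrow> (\<exists>F B F'. dpath E F \<and> dpath E B \<and> dpath E F' \<and>
     hd F = p \<and> last F = last B \<and> hd B = hd F' \<and> last F' = q \<and> b \<le> plen B \<and>
     distinct (butlast F @ tl B @ F') \<and> set F \<union> set B \<union> set F' \<subseteq> V)"

lemma detourI:
  assumes "dpath E F" "dpath E B" "dpath E F'" "hd F = p" "last F = last B" "hd B = hd F'"
    "last F' = q" "b \<le> plen B" "distinct (butlast F @ tl B @ F')" "set F \<union> set B \<union> set F' \<subseteq> V"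
  shows "detour b V E p q"
  using assms unfolding detour_def by blast

lemma zigzag_prepend_back_and_forth:
  assumes Z: "zigzag E b a N w x" and a: "1 \<le> a" and first_long: "b \<le> x 1"
    and paths: "dpath E F" "dpath E B" "dpath E F'"
    and ends: "last F = last B" "hd B = hd F'" "last F' = w 0" and "b \<le> plen B"
    and dist: "distinct (butlast F @ tl B @ F')"
    and outside: "set (butlast F @ tl B @ butlast F') \<inter> w ` {..N} = {}"
  shows "\<exists>N' w' x'. zigzag E b (Suc a) N' w' x' \<and> w' 0 = hd F \<and> w' N' = w N \<and>
           w' ` {..N'} = set (butlast F @ tl B @ butlast F') \<union> w ` {..N}"
proof -
  have ne: "F \<noteq> []" "B \<noteq> []" "F' \<noteq> []" using paths by (auto simp: dpath_def)
  define w1 where "w1 = prepend_path F' w"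
  define N1 where "N1 = plen F' + N"
  obtain x1 where Z1: "zigzag E b a N1 w1 x1" and "b \<le> x1 1"
    using zigzag_prepend_forward[OF Z a paths(3) ends(3)] outside first_long
    unfolding w1_def N1_def by fastforce
  have W1: "w1 ` {..N1} = set (butlast F') \<union> w ` {..N}" and "w1 0 = hd F'"
    unfolding w1_def N1_def using ne ends by (simp_all add: image_prepend_path prepend_path_0)
  define w2 where "w2 = prepend_path (rev B) w1"
  define N2 where "N2 = plen B + N1"
  have "set (tl B) \<inter> w1 ` {..N1} = {}"
    using dist outside set_butlast_subset[of F'] unfolding W1 by auto
  then obtain x2 where Z2: "zigzag E b (Suc a) N2 w2 x2"
    using zigzag_prepend_backward[OF Z1 a \<open>b \<le> x1 1\<close> paths(2)] \<open>b \<le> plen B\<close> ends(2)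
      \<open>w1 0 = hd F'\<close>
    unfolding w2_def N2_def by auto
  have W2: "w2 ` {..N2} = set (tl B) \<union> w1 ` {..N1}" and "w2 0 = last B"
    unfolding w2_def N2_def using ne ends \<open>w1 0 = hd F'\<close>
    by (simp_all add: image_prepend_path[of "rev B", simplified] prepend_path_0 hd_rev last_rev)
  have "set (butlast F) \<inter> w2 ` {..N2} = {}"
    using dist outside set_butlast_subset[of F'] unfolding W2 W1 by auto
  then obtain x3 where "zigzag E b (Suc a) (plen F + N2) (prepend_path F w2) x3"
    using zigzag_prepend_forward[OF Z2 _ paths(1)] ends(1) \<open>w2 0 = last B\<close> by auto
  moreover have "prepend_path F w2 0 = hd F" "prepend_path F w2 (plen F + N2) = w N"
    using ne ends \<open>w2 0 = last B\<close>
    by (simp_all add: prepend_path_0 prepend_path_shift w2_def N2_def w1_def N1_def)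
  moreover have "prepend_path F w2 ` {..plen F + N2} = set (butlast F @ tl B @ butlast F') \<union> w ` {..N}"
    unfolding image_prepend_path W2 W1 by auto
  ultimately show ?thesis by blast
qed

lemma zigzag_prepend_detour:
  assumes Z: "zigzag E b a N w x" and "1 \<le> a" "b \<le> x 1"
    and D: "detour b V E' v (w 0)" and "E' \<subseteq> E" and meet: "V \<inter> w ` {..N} \<subseteq> {w 0}"
  shows "\<exists>N' w' x'. zigzag E b (Suc a) N' w' x' \<and> w' 0 = v \<and> w' N' = w N \<and>
           w' ` {..N'} \<subseteq> V \<union> w ` {..N}"
proof -
  obtain F B F' where paths: "dpath E' F" "dpath E' B" "dpath E' F'"
    and ends: "hd F = v" "last F = last B" "hd B = hd F'" "last F' = w 0"
    and "b \<le> plen B" and dist: "distinct (butlast F @ tl B @ F')"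
    and sub: "set F \<union> set B \<union> set F' \<subseteq> V"
    using D unfolding detour_def by blast
  have "set (butlast F @ tl B @ butlast F') \<subseteq> V"
    using sub set_butlast_subset[of F] set_tl_subset[of B] set_butlast_subset[of F'] by auto
  moreover have "w 0 \<notin> set (butlast F @ tl B @ butlast F')"
    using paths(3) dist ends(4) last_in_set[of F'] last_notin_butlast[of F']
    by (auto simp: dpath_def)
  ultimately have "set (butlast F @ tl B @ butlast F') \<inter> w ` {..N} = {}"
    using meet by auto
  moreover have "dpath E F" "dpath E B" "dpath E F'"
    using paths \<open>E' \<subseteq> E\<close> by (auto intro: dpath_mono)
  ultimately obtain N' w' x' where "zigzag E b (Suc a) N' w' x'" "w' 0 = v" "w' N' = w N"
      "w' ` {..N'} = set (butlast F @ tl B @ butlast F') \<union> w ` {..N}"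
    using zigzag_prepend_back_and_forth[OF Z \<open>1 \<le> a\<close> \<open>b \<le> x 1\<close>] ends \<open>b \<le> plen B\<close> dist
    by metis
  then show ?thesis using \<open>set (butlast F @ tl B @ butlast F') \<subseteq> V\<close> by blast
qed

lemma gadget_I_detour:
  assumes b: "1 \<le> b" and g: "gadget_I b V E p q"
  shows "detour b V E p q"
proof -
  obtain cs where cs: "distinct cs" "4 * b^2 \<le> length cs" "V = set cs" "E = cycle_arcs cs"
    and pq: "(p, q) \<in> E"
    using g unfolding gadget_I_def by blast
  have "q \<in> set cs"
    using pq cs(4) by (cases cs) (auto simp: cycle_arcs_def dest: set_zip_rightD)
  then obtain ys zs where cs_split: "cs = ys @ q # zs" by (meson split_list)
  define B where "B = q # zs @ ys" \<comment> \<open>the cycle read from \<open>q\<close>, ending at its predecessor \<open>p\<close>\<close>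
  have "cycle_arcs B = E"
    using cycle_arcs_rotate[of "length ys" cs] cs(4) unfolding cs_split B_def
    by (simp add: rotate_append)
  moreover have "distinct B" "B \<noteq> []" "hd B = q" using cs(1) unfolding cs_split B_def by auto
  ultimately have B: "dpath E B" "last B = p"
    using cycle_arcs_eq[of B] cycle_arcs_into_hd[of B p] pq unfolding dpath_def by auto
  have "b \<le> b^2" using b by (simp add: self_le_power)
  then have "b \<le> plen B" using cs(2) b unfolding cs_split B_def plen_def by simp
  moreover have "distinct (tl B @ [q])" "set B = V"
    using cs(1,3) unfolding cs_split B_def by auto
  ultimately show ?thesis
    using B \<open>hd B = q\<close> \<open>B \<noteq> []\<close> by (intro detourI[where F = "[p]" and B = B and F' = "[q]"]) auto
qed

lemma gadget_II_basic_detour: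
  assumes b: "1 \<le> b" and g: "gadget_II_basic b V E p q"
  shows "detour b V E p q"
proof -
  obtain r P1 where P1: "P1 \<noteq> []" "distinct P1" "hd P1 = r" "last P1 = p"
      "2 * b^2 + b - 2 \<le> plen P1" "q \<notin> set P1"
    and V: "V = insert q (set P1)" and E: "E = path_arcs P1 \<union> {(x, q) | x. x \<in> set P1}"
    using g unfolding gadget_II_basic_def by blast
  have "b \<le> b^2" using b by (simp add: self_le_power)
  then have "b \<le> plen P1" using P1(5) b by linarith
  moreover have "dpath E P1" using P1 E by (auto simp: dpath_def)
  moreover have "dpath E [r, q]" using P1 E by (intro dpath_arc) auto
  moreover have "distinct (tl P1 @ [r, q])"
    using P1 by (cases P1) auto
  ultimately show ?thesis
    using P1 V by (intro detourI[where F = "[p]" and B = P1 and F' = "[r, q]"]) auto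
qed

lemma gadget_III_detour:
  assumes b: "1 \<le> b" and g: "gadget_III b V E p q"
  shows "detour b V E p q"
proof -
  obtain r P1 P2 where "p \<noteq> q"
      and P1: "P1 \<noteq> []" "distinct P1" "hd P1 = p" "last P1 = r" "2 * b - 1 \<le> plen P1"
      and P2: "P2 \<noteq> []" "distinct P2" "hd P2 = q" "last P2 = r" "2 * b - 1 \<le> plen P2"
      and disj: "set (inner P1) \<inter> set P2 = {}" "set (inner P2) \<inter> set P1 = {}"
      and V: "V = set P1 \<union> set P2" and E: "E = {(p, q)} \<union> path_arcs P1 \<union> path_arcs P2"
    using g unfolding gadget_III_def by blast
  have "2 \<le> length P1" "2 \<le> length P2"
    using b P1(5) P2(5) by (auto simp: plen_def)
  then obtain I1 I2 where P12: "P1 = p # I1 @ [r]" "P2 = q # I2 @ [r]"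
    using hd_inner_last P1(3,4) P2(3,4) by metis
  have "distinct (butlast P1 @ tl P2 @ [q])"
    using P1(2) P2(2) disj \<open>p \<noteq> q\<close> unfolding P12 by (auto simp: inner_def)
  moreover have "b \<le> plen P2" "dpath E P1" "dpath E P2"
    using b P1 P2 E by (auto simp: dpath_def)
  ultimately show ?thesis
    using P1 P2 V by (intro detourI[where F = P1 and B = P2 and F' = "[q]"]) auto
qed

section \<open>Walking along a chain\<close>

definition chain_vertices ::
  "'a list \<Rightarrow> ('a \<times> 'a) set \<Rightarrow> ('a \<times> 'a \<Rightarrow> 'a set \<times> ('a \<times> 'a) set) \<Rightarrow> 'a set" where
  "chain_vertices vs A2 G = set vs \<union> (\<Union>e\<in>A2. fst (G e))"

definition zigzag_along ::
  "('a \<times> 'a) set \<Rightarrow> nat \<Rightarrow> nat \<Rightarrow> nat \<Rightarrow> 'a list \<Rightarrow> ('a \<times> 'a) set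
     \<Rightarrow> ('a \<times> 'a \<Rightarrow> 'a set \<times> ('a \<times> 'a) set) \<Rightarrow> bool" where
  "zigzag_along E b a r vs A2 G \<longleftrightarrow> (\<exists>N w x. zigzag E b a N w x \<and> r \<le> x 1 \<and>
     w 0 = hd vs \<and> w N = last vs \<and> w ` {..N} \<subseteq> chain_vertices vs A2 G)"

lemma zigzag_along_mono: "zigzag_along E b a r vs A2 G \<Longrightarrow> r' \<le> r \<Longrightarrow> zigzag_along E b a r' vs A2 G"
  unfolding zigzag_along_def using order_trans by blast

lemma chain_finite_A2: "chain b vs A1 A2 G \<Longrightarrow> finite A2"
  unfolding chain_def by (metis finite_Un finite_path_arcs)

lemma chain_gadget_detour:
  assumes "chain b vs A1 A2 G" "1 \<le> b" "e \<in> A2"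
  shows "detour b (fst (G e)) (snd (G e)) (fst e) (snd e)"
proof -
  have "gadget_I b (fst (G e)) (snd (G e)) (fst e) (snd e) \<or>
      gadget_II_basic b (fst (G e)) (snd (G e)) (fst e) (snd e) \<or>
      gadget_III b (fst (G e)) (snd (G e)) (fst e) (snd e)"
    using assms(1,3) unfolding chain_def by simp
  then show ?thesis
    by (auto intro: gadget_I_detour[OF assms(2)] gadget_II_basic_detour[OF assms(2)]
        gadget_III_detour[OF assms(2)])
qed

context
  fixes b v vs A1 A2 G
  assumes chain: "chain b (v # vs) A1 A2 G" and ne: "vs \<noteq> []"
begin

lemma chain_head_notin_tail: "v \<notin> chain_vertices vs (A2 - {(v, hd vs)}) G"
proof
  assume "v \<in> chain_vertices vs (A2 - {(v, hd vs)}) G"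
  moreover have "v \<notin> set vs" using chain by (simp add: chain_def)
  ultimately obtain f where f: "f \<in> A2 - {(v, hd vs)}" "v \<in> fst (G f)"
    unfolding chain_vertices_def by auto
  then have "f \<in> path_arcs vs" using chain path_arcs_Cons[OF ne] unfolding chain_def by auto
  then have "fst f \<in> set vs" "snd f \<in> set vs" using path_arcs_subset_set[of "fst f" "snd f"] by auto
  moreover have "v \<in> {fst f, snd f}" using chain f unfolding chain_def by auto
  ultimately show False using \<open>v \<notin> set vs\<close> by auto
qed

lemma chain_tail: "chain b vs (A1 - {(v, hd vs)}) (A2 - {(v, hd vs)}) G"
  unfolding chain_def
proof (intro conjI)
  have "distinct (v # vs)" and arcs: "A1 \<union> A2 = path_arcs (v # vs)" and "A1 \<inter> A2 = {}"
    using chain unfolding chain_def by auto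
  then have "(v, hd vs) \<notin> path_arcs vs"
    using path_arcs_subset_set[of v "hd vs" vs] by auto
  then show "A1 - {(v, hd vs)} \<union> (A2 - {(v, hd vs)}) = path_arcs vs"
    using arcs path_arcs_Cons[OF ne] by auto
  show "distinct vs" "(A1 - {(v, hd vs)}) \<inter> (A2 - {(v, hd vs)}) = {}"
    using \<open>distinct (v # vs)\<close> \<open>A1 \<inter> A2 = {}\<close> by auto
  have tail_ends: "fst f \<in> set vs" "snd f \<in> set vs" if "f \<in> A2 - {(v, hd vs)}" for f
    using that arcs path_arcs_Cons[OF ne] path_arcs_subset_set[of "fst f" "snd f" vs] by auto
  then show "\<forall>f\<in>A2 - {(v, hd vs)}. fst (G f) \<inter> set vs = {fst f, snd f}"
    using chain unfolding chain_def by auto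
  have v_outside: "v \<notin> fst (G f)" if "f \<in> A2 - {(v, hd vs)}" for f
    using chain_head_notin_tail that unfolding chain_vertices_def by auto
  show "\<forall>f\<in>A2 - {(v, hd vs)}. \<forall>g\<in>A2 - {(v, hd vs)}. f \<noteq> g \<longrightarrow>
      fst (G f) \<inter> fst (G g) \<subseteq> set vs"
  proof (intro ballI impI)
    fix f g assume f: "f \<in> A2 - {(v, hd vs)}" and g: "g \<in> A2 - {(v, hd vs)}" and "f \<noteq> g"
    then have "fst (G f) \<inter> fst (G g) \<subseteq> set (v # vs)"
      using chain unfolding chain_def by (meson DiffD1)
    then show "fst (G f) \<inter> fst (G g) \<subseteq> set vs" using v_outside[OF f] by auto
  qed
qed (use chain ne in \<open>auto simp: chain_def\<close>)

lemma chain_gadget_meets_tail: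
  assumes "(v, hd vs) \<in> A2"
  shows "fst (G (v, hd vs)) \<inter> chain_vertices vs (A2 - {(v, hd vs)}) G \<subseteq> {hd vs}"
proof
  fix y assume y: "y \<in> fst (G (v, hd vs)) \<inter> chain_vertices vs (A2 - {(v, hd vs)}) G"
  have ends: "fst (G (v, hd vs)) \<inter> set (v # vs) = {v, hd vs}"
    using chain assms unfolding chain_def by auto
  have "y \<in> set (v # vs)"
  proof (cases "y \<in> set vs")
    case False
    then obtain f where "f \<in> A2 - {(v, hd vs)}" "y \<in> fst (G f)"
      using y unfolding chain_vertices_def by auto
    moreover have "\<forall>e\<in>A2. \<forall>f\<in>A2. e \<noteq> f \<longrightarrow> fst (G e) \<inter> fst (G f) \<subseteq> set (v # vs)"
      using chain unfolding chain_def by simp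
    ultimately show ?thesis using assms y by auto
  qed simp
  moreover have "y \<noteq> v" using y chain_head_notin_tail by auto
  ultimately show "y \<in> {hd vs}" using ends y by auto
qed


lemma zigzag_along_Cons_arc:
  assumes "(v, hd vs) \<in> E" "1 \<le> a" "zigzag_along E b a r vs (A2 - {(v, hd vs)}) G"
  shows "zigzag_along E b a (Suc r) (v # vs) A2 G"
proof -
  obtain N w x where Z: "zigzag E b a N w x" "r \<le> x 1" "w 0 = hd vs" "w N = last vs"
      "w ` {..N} \<subseteq> chain_vertices vs (A2 - {(v, hd vs)}) G"
    using assms(3) unfolding zigzag_along_def by blast
  have "v \<noteq> hd vs" using chain ne by (auto simp: chain_def)
  then have "dpath E [v, w 0]" using assms(1) Z(3) by (intro dpath_arc) auto
  moreover have "v \<notin> w ` {..N}" using chain_head_notin_tail Z(5) by blast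
  ultimately obtain x' where "zigzag E b a (Suc N) (prepend_path [v, w 0] w) x'" "x' 1 = x 1 + 1"
    using zigzag_prepend_forward[OF Z(1) assms(2), of "[v, w 0]"] by (auto simp: plen_def)
  moreover have "prepend_path [v, w 0] w 0 = hd (v # vs)"
    "prepend_path [v, w 0] w (Suc N) = last (v # vs)"
    using Z(4) ne by (simp_all add: prepend_path_def plen_def)
  moreover have "prepend_path [v, w 0] w ` {..Suc N} \<subseteq> chain_vertices (v # vs) A2 G"
    using image_prepend_path[of "[v, w 0]" w N] Z(5) by (auto simp: plen_def chain_vertices_def)
  ultimately show ?thesis using Z(2) unfolding zigzag_along_def by fastforce
qed

lemma zigzag_along_Cons_detour:
  assumes A2: "(v, hd vs) \<in> A2" and "snd (G (v, hd vs)) \<subseteq> E" "1 \<le> b" "1 \<le> a"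
    and "zigzag_along E b a b vs (A2 - {(v, hd vs)}) G"
  shows "zigzag_along E b (Suc a) 0 (v # vs) A2 G"
proof -
  obtain N w x where Z: "zigzag E b a N w x" "b \<le> x 1" "w 0 = hd vs" "w N = last vs"
      "w ` {..N} \<subseteq> chain_vertices vs (A2 - {(v, hd vs)}) G"
    using assms(5) unfolding zigzag_along_def by blast
  have "detour b (fst (G (v, hd vs))) (snd (G (v, hd vs))) v (w 0)"
    using chain_gadget_detour[OF chain \<open>1 \<le> b\<close> A2] Z(3) by simp
  moreover have "fst (G (v, hd vs)) \<inter> w ` {..N} \<subseteq> {w 0}"
    using chain_gadget_meets_tail[OF A2] Z(3,5) by auto
  ultimately obtain N' w' x' where Z': "zigzag E b (Suc a) N' w' x'" "w' 0 = v" "w' N' = w N"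
      "w' ` {..N'} \<subseteq> fst (G (v, hd vs)) \<union> w ` {..N}"
    using zigzag_prepend_detour[OF Z(1) \<open>1 \<le> a\<close> Z(2) _ assms(2)] by blast
  moreover have "fst (G (v, hd vs)) \<union> w ` {..N} \<subseteq> chain_vertices (v # vs) A2 G"
    using A2 Z(5) unfolding chain_vertices_def by auto
  ultimately show ?thesis
    unfolding zigzag_along_def using Z(4) ne
    by (intro exI[of _ N'] exI[of _ w'] exI[of _ x']) auto
qed

end

text \<open>
  A forward segment ends in a detour only after it has crossed \<open>b\<close> arcs of \<open>A\<^sub>2\<close> along
  the spine; \<open>r\<close> is the number of such arcs the first segment still has to cross.
\<close>

lemma chain_zigzag_along:
  assumes "chain b vs A1 A2 G" "chain_arcs vs A2 G \<subseteq> E" "1 \<le> b"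
    and "1 \<le> a" "r \<le> b" "(a - 1) * (b + 1) + r \<le> card A2"
  shows "zigzag_along E b a r vs A2 G"
  using assms
proof (induction vs arbitrary: A1 A2 a r)
  case Nil
  then show ?case by (simp add: chain_def)
next
  case (Cons v vs)
  show ?case
  proof (cases "vs = []")
    case True
    then have "A2 = {}" using Cons.prems(1) by (auto simp: chain_def)
    then have "a = 1" "r = 0" using Cons.prems(4,6) by auto
    then have "zigzag E b a 0 (\<lambda>_. v) (\<lambda>_. 0)" by (simp add: zigzag_def)
    then show ?thesis
      using \<open>r = 0\<close> True unfolding zigzag_along_def by (auto simp: chain_vertices_def)
  next
    case False
    define e where "e = (v, hd vs)"
    have tail: "chain b vs (A1 - {e}) (A2 - {e}) G"
      unfolding e_def using chain_tail[OF Cons.prems(1) False] .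
    have arcs: "chain_arcs vs (A2 - {e}) G \<subseteq> E" "e \<in> E"
      using Cons.prems(2) path_arcs_Cons[OF False] unfolding chain_arcs_def e_def by auto
    have card: "card (A2 - {e}) = (if e \<in> A2 then card A2 - 1 else card A2)"
      using chain_finite_A2[OF Cons.prems(1)] by simp
    show ?thesis
    proof (cases "e \<in> A2 \<and> r = 0 \<and> 2 \<le> a")
      case True
      then obtain a0 where "a = Suc (Suc a0)" by (metis add_2_eq_Suc le_Suc_ex)
      then have "zigzag_along E b (Suc a0) b vs (A2 - {e}) G"
        using Cons.IH[OF tail arcs(1) Cons.prems(3)] Cons.prems(6) card True by simp
      moreover have "snd (G e) \<subseteq> E"
        using Cons.prems(2) True unfolding chain_arcs_def by auto
      ultimately show ?thesis
        using zigzag_along_Cons_detour[OF Cons.prems(1) False] True Cons.prems(3) \<open>a = _\<close>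
        unfolding e_def by simp
    next
      case False
      define r' where "r' = (if e \<in> A2 \<and> 0 < r then r - 1 else r)"
      have "(a - 1) * (b + 1) + r' \<le> card (A2 - {e})" "r' \<le> b" "r \<le> Suc r'"
        using Cons.prems(4,5,6) False card unfolding r'_def by (auto split: if_splits)
      then have "zigzag_along E b a (Suc r') (v # vs) A2 G"
        using Cons.IH[OF tail arcs(1) Cons.prems(3,4)] arcs(2) Cons.prems(4)
          zigzag_along_Cons_arc[OF Cons.prems(1) \<open>vs \<noteq> []\<close>]
        unfolding e_def by blast
      then show ?thesis using \<open>r \<le> Suc r'\<close> by (rule zigzag_along_mono)
    qed
  qed
qed

theorem lemma2p7:
  fixes a b :: nat
    and vs :: "'a list"
    and A1 A2 :: "('a \<times> 'a) set"
    and G :: "'a \<times> 'a \<Rightarrow> 'a set \<times> ('a \<times> 'a) set"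
  assumes "1 \<le> a" and "1 \<le> b"
    and "chain b vs A1 A2 G"
    and "card A2 \<ge> a * (b + 1) - 1"
  shows "\<exists>s t Q Q'. strong_alt_path (chain_arcs vs A2 G) a b s t Q Q'
                     \<and> s 1 = hd vs \<and> t a = last vs"
proof -
  have "(a - 1) * (b + 1) + b \<le> card A2"
    using assms(1,4) by (cases a) auto
  then obtain N w x where Z: "zigzag (chain_arcs vs A2 G) b a N w x" "b \<le> x 1"
      "w 0 = hd vs" "w N = last vs"
    using chain_zigzag_along[OF assms(3) order_refl assms(2,1) order_refl]
    unfolding zigzag_along_def by blast
  then show ?thesis
    using zigzag_strong_alt_path[OF Z(1) assms(2) Z(2) assms(1)] by simp
qed

end
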